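(* Assume the seeds are i.i.d. uniform on $[n]$. Let $M:\mathbb N\to\mathbb N$ satisfy $\lim_{n\to\infty}M(n)/\log n=\infty$. Let $(l_n)$, indexed by even $n\ge6$, be a sequence of integers such that eventually $l_n\in L_{opt}(n,M(n))$, where $$L_{opt}(n,m)=\operatorname*{arg\,max}_{l\in\{2,\dots,n/2-1\}}p_1(n,m,l).$$ Then, as $n\to\infty$ along even integers, $$\lim_{n\to\infty}\frac{l_n}{n}=\frac15\qquad\text{and}\qquad \limsup_{n\to\infty}\frac{1}{M(n)}\log\bigl[1-p_1(n,M(n),l_n)\bigr]\le\log\frac45 .$$
   Context: Candidates $[n]$, $m$ voters; voter $j$ has the clockwise oriented preference list $(s_j,s_j+1,\dots,n,1,\dots,s_j-1)$ with seed $s_j$; seeds are independent and uniform on $[n]$. In an election among a non-empty $S\subseteq[n]$ each voter votes for the first candidate of $S$ in its list; $\Xi_S(i)$ is the number of votes for $i$. Two-round election with partition $(A,B)$: the winner of $A$ is the $a\in A$ with $\Xi_A(a)>\Xi_A(a')$ for all other $a'\in A$ (if none, nobody wins); likewise for $B$; between first-round winners $a,b$, $a$ wins iff $\Xi_{\{a,b\}}(a)>\Xi_{\{a,b\}}(b)$ (ties: nobody wins). For even $n$ and $2\le l<n/2$, $A^{(1,n,l)}=\{1,\dots,l\}\cup\{l+2i:1\le i\le(n-2l)/2\}$, $B^{(1,n,l)}=[n]\setminus A^{(1,n,l)}$, and $p_1(n,m,l)$ is the probability that candidate $1$ wins the two-round election with partition $(A^{(1,n,l)},B^{(1,n,l)})$;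 $\log 0=-\infty$. *)

theory Defs
  imports Complex_Main "HOL-Library.FuncSet" "HOL-Library.Extended_Real" "HOL-Library.Liminf_Limsup"
begin

text \<open>Candidates are 1..n. A voter with seed s has the preference list
  (s, s+1, ..., n, 1, ..., s-1); the position of candidate c in it is cpos n s c.\<close>
definition cpos :: "nat \<Rightarrow> nat \<Rightarrow> nat \<Rightarrow> nat" where
  "cpos n s c = (c + n - s) mod n"

definition vote :: "nat \<Rightarrow> nat \<Rightarrow> nat set \<Rightarrow> nat" where
  "vote n s S = (THE c. c \<in> S \<and> (\<forall>c'\<in>S. cpos n s c \<le> cpos n s c'))"

definition Xi :: "nat \<Rightarrow> nat \<Rightarrow> (nat \<Rightarrow> nat) \<Rightarrow> nat set \<Rightarrow> nat \<Rightarrow> nat" where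
  "Xi n m seeds S i = card {j \<in> {0..<m}. vote n (seeds j) S = i}"

definition winner :: "nat \<Rightarrow> nat \<Rightarrow> (nat \<Rightarrow> nat) \<Rightarrow> nat set \<Rightarrow> nat option" where
  "winner n m seeds S =
     (if \<exists>a\<in>S. \<forall>a'\<in>S. a' \<noteq> a \<longrightarrow> Xi n m seeds S a > Xi n m seeds S a'
      then Some (THE a. a \<in> S \<and> (\<forall>a'\<in>S. a' \<noteq> a \<longrightarrow> Xi n m seeds S a > Xi n m seeds S a'))
      else None)"

definition wins_two_round ::
  "nat \<Rightarrow> nat \<Rightarrow> (nat \<Rightarrow> nat) \<Rightarrow> nat set \<Rightarrow> nat set \<Rightarrow> nat \<Rightarrow> bool" where
  "wins_two_round n m seeds A B x =
     (\<exists>a b. winner n m seeds A = Some a \<and> winner n m seeds B = Some b \<and>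
        ((x = a \<and> Xi n m seeds {a, b} a > Xi n m seeds {a, b} b) \<or>
         (x = b \<and> Xi n m seeds {a, b} b > Xi n m seeds {a, b} a)))"

definition Apart :: "nat \<Rightarrow> nat \<Rightarrow> nat set" where
  "Apart n l = {1..l} \<union> {l + 2 * i | i. 1 \<le> i \<and> i \<le> (n - 2 * l) div 2}"

definition Bpart :: "nat \<Rightarrow> nat \<Rightarrow> nat set" where
  "Bpart n l = {1..n} - Apart n l"

text \<open>Seeds i.i.d. uniform on [n]: uniform over all seed vectors (counting).\<close>
definition p1 :: "nat \<Rightarrow> nat \<Rightarrow> nat \<Rightarrow> real" where
  "p1 n m l = real (card {seeds \<in> {0..<m} \<rightarrow>\<^sub>E {1..n}.
                 wins_two_round n m seeds (Apart n l) (Bpart n l) 1}) / real n ^ m"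

definition L_opt :: "nat \<Rightarrow> nat \<Rightarrow> nat set" where
  "L_opt n m = {l \<in> {2..n div 2 - 1}. \<forall>l'\<in>{2..n div 2 - 1}. p1 n m l' \<le> p1 n m l}"

definition logE :: "real \<Rightarrow> ereal" where
  "logE x = (if x = 0 then -\<infinity> else ereal (ln x))"

end

theory Submission
  imports Defs
begin

(* Write x = l/n. Candidate 1 loses only if (i) some rival c in A outpolls it, although at most
   the two seeds just above the predecessor of c in A vote for c while the l+1 seeds 1 and
   n-l+1, ..., n vote for 1; (ii) the same happens to l+1, which the seeds 1, ..., l+1 vote for,
   in B; or (iii) in the final against l+1 the seeds 2, ..., l+1 are at least as many as the
   other n-l. Exponential-moment bounds turn this into 1 - p1 <= (n+1) q^m with q tending to
   max (1 - x) (2 sqrt (x (1 - x))). Conversely 1 certainly loses if no seed is 1 or above n-l,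
   which has probability (1 - x - 1/n)^m, and if the seeds 2, ..., l+1 are at least half, which
   has probability at least x (2 sqrt (x (1 - x)))^m / (m+1). As m / log n tends to infinity, the
   polynomial factors are negligible; comparing an optimal l with l = n/5 forces x towards the
   minimiser of max (1 - x) (2 sqrt (x (1 - x))), which is 1/5, where both terms equal 4/5. *)

abbreviation seed_profiles :: "nat \<Rightarrow> nat \<Rightarrow> (nat \<Rightarrow> nat) set" where
  "seed_profiles n m \<equiv> {0..<m} \<rightarrow>\<^sub>E {1..n}"

section \<open>Votes on the cycle\<close>

lemma cpos_eq:
  assumes "s \<in> {1..n}" "c \<in> {1..n}"
  shows "cpos n s c = (if s \<le> c then c - s else c + n - s)"
proof (cases "s \<le> c")
  case True
  then have "c + n - s = (c - s) + n" by simp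
  then have "cpos n s c = (c - s) mod n" by (simp only: cpos_def mod_add_self2)
  then show ?thesis using True assms by simp
qed (use assms in \<open>simp add: cpos_def\<close>)

lemma vote_eqI:
  assumes S: "S \<subseteq> {1..n}" and s: "s \<in> {1..n}" and "c \<in> S"
    and min: "\<And>d. d \<in> S \<Longrightarrow> cpos n s c \<le> cpos n s d"
  shows "vote n s S = c"
  unfolding vote_def
proof (rule the_equality)
  fix d assume d: "d \<in> S \<and> (\<forall>c'\<in>S. cpos n s d \<le> cpos n s c')"
  then have "cpos n s d = cpos n s c" using min \<open>c \<in> S\<close> by (simp add: order_antisym)
  moreover have "c \<in> {1..n}" "d \<in> {1..n}" using S d \<open>c \<in> S\<close> by auto
  ultimately show "d = c" using s by (auto simp: cpos_eq split: if_splits)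
qed (use assms in blast)

lemma vote_mem_min:
  assumes S: "S \<subseteq> {1..n}" and s: "s \<in> {1..n}" and "d \<in> S"
  shows "vote n s S \<in> S" "cpos n s (vote n s S) \<le> cpos n s d"
proof -
  obtain c where "c \<in> S" and min: "\<And>d. d \<in> S \<Longrightarrow> cpos n s c \<le> cpos n s d"
    using ex_has_least_nat[of "\<lambda>c. c \<in> S" d "cpos n s"] \<open>d \<in> S\<close> by blast
  with vote_eqI[OF S s] have "vote n s S = c" by blast
  then show "vote n s S \<in> S" "cpos n s (vote n s S) \<le> cpos n s d"
    using \<open>c \<in> S\<close> min \<open>d \<in> S\<close> by auto
qed

lemma vote_between:
  assumes S: "S \<subseteq> {1..n}" and s: "s \<in> {1..n}"
    and "vote n s S = c" "d \<in> S" "d < c"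
  shows "d < s \<and> s \<le> c"
proof -
  have "c \<in> S" "cpos n s c \<le> cpos n s d" using vote_mem_min[OF S s \<open>d \<in> S\<close>] assms(3) by auto
  moreover have "c \<in> {1..n}" "d \<in> {1..n}" using S \<open>d \<in> S\<close> \<open>c \<in> S\<close> by auto
  ultimately show ?thesis using s \<open>d < c\<close> by (auto simp: cpos_eq split: if_splits)
qed

lemma vote_wraps:
  assumes S: "S \<subseteq> {1..n}" and s: "s \<in> {1..n}"
    and "vote n s S = c" "c < s" "d \<in> S"
  shows "d < s"
proof -
  have "c \<in> S" "cpos n s c \<le> cpos n s d" using vote_mem_min[OF S s \<open>d \<in> S\<close>] assms(3) by auto
  moreover have "c \<in> {1..n}" "d \<in> {1..n}" using S \<open>d \<in> S\<close> \<open>c \<in> S\<close> by auto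
  ultimately show ?thesis using s \<open>c < s\<close> by (auto simp: cpos_eq split: if_splits)
qed

lemma vote_eq_next:
  assumes S: "S \<subseteq> {1..n}" and s: "s \<in> {1..n}" and "c \<in> S" "s \<le> c"
    and first: "\<And>d. d \<in> S \<Longrightarrow> s \<le> d \<Longrightarrow> c \<le> d"
  shows "vote n s S = c"
proof (rule vote_eqI[OF S s \<open>c \<in> S\<close>])
  fix d assume "d \<in> S"
  with S \<open>c \<in> S\<close> have "c \<in> {1..n}" "d \<in> {1..n}" by auto
  with first[OF \<open>d \<in> S\<close>] show "cpos n s c \<le> cpos n s d" using s \<open>s \<le> c\<close> by (auto simp: cpos_eq)
qed

lemma vote_eq_wrap:
  assumes S: "S \<subseteq> {1..n}" and s: "s \<in> {1..n}" and "c \<in> S"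
    and below: "\<And>d. d \<in> S \<Longrightarrow> d < s \<and> c \<le> d"
  shows "vote n s S = c"
proof (rule vote_eqI[OF S s \<open>c \<in> S\<close>])
  fix d assume "d \<in> S"
  with S \<open>c \<in> S\<close> have "c \<in> {1..n}" "d \<in> {1..n}" by auto
  with below[OF \<open>d \<in> S\<close>] below[OF \<open>c \<in> S\<close>] show "cpos n s c \<le> cpos n s d"
    using s by (auto simp: cpos_eq)
qed

lemma vote_pair:
  assumes "1 < b" "b \<le> n" "s \<in> {1..n}"
  shows "vote n s {1, b} = (if s \<in> {2..b} then b else 1)"
proof -
  have S: "{1, b} \<subseteq> {1..n}" using assms by auto
  consider "s = 1" | "s \<in> {2..b}" | "b < s" using assms by force
  then show ?thesis
  proof cases
    case 1
    have "vote n s {1, b} = 1" by (rule vote_eq_next[OF S]) (use 1 assms in auto)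
    then show ?thesis using 1 by simp
  next
    case 2
    have "vote n s {1, b} = b" by (rule vote_eq_next[OF S]) (use 2 assms in auto)
    then show ?thesis using 2 by simp
  next
    case 3
    have "vote n s {1, b} = 1" by (rule vote_eq_wrap[OF S]) (use 3 assms in auto)
    then show ?thesis using 3 by simp
  qed
qed

definition electorate :: "nat \<Rightarrow> nat set \<Rightarrow> nat \<Rightarrow> nat set" where
  "electorate n S c = {s \<in> {1..n}. vote n s S = c}"

lemma finite_electorate [simp]: "finite (electorate n S c)"
  by (simp add: electorate_def)

lemma electorate_subset_interval:
  assumes "S \<subseteq> {1..n}" "d \<in> S" "d < c"
  shows "electorate n S c \<subseteq> {d<..c}"
  using vote_between[OF assms(1) _ _ assms(2,3)] by (auto simp: electorate_def)

lemma card_electorate_le: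
  assumes "S \<subseteq> {1..n}" "d \<in> S" "d < c"
  shows "card (electorate n S c) \<le> c - d"
  using card_mono[OF _ electorate_subset_interval[OF assms]] by simp

lemma electorate_pair:
  assumes "1 < b" "b \<le> n"
  shows "electorate n {1, b} b = {2..b}" "electorate n {1, b} 1 = {1..n} - {2..b}"
proof -
  have "s \<in> electorate n {1, b} c \<longleftrightarrow> s \<in> {1..n} \<and> (if s \<in> {2..b} then b else 1) = c" for s c
    using vote_pair[OF assms] by (auto simp: electorate_def)
  then show "electorate n {1, b} b = {2..b}" "electorate n {1, b} 1 = {1..n} - {2..b}"
    using assms by (auto split: if_splits)
qed

definition seed_count :: "nat \<Rightarrow> (nat \<Rightarrow> nat) \<Rightarrow> nat set \<Rightarrow> nat" where
  "seed_count m f T = card {j \<in> {0..<m}. f j \<in> T}"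

lemma seed_count_mono: "T \<subseteq> T' \<Longrightarrow> seed_count m f T \<le> seed_count m f T'"
  unfolding seed_count_def by (intro card_mono) auto

lemma Xi_eq_seed_count:
  assumes "f \<in> seed_profiles n m"
  shows "Xi n m f S c = seed_count m f (electorate n S c)"
proof -
  have "{j \<in> {0..<m}. vote n (f j) S = c} = {j \<in> {0..<m}. f j \<in> electorate n S c}"
    using assms by (auto simp: electorate_def PiE_iff)
  then show ?thesis by (simp add: Xi_def seed_count_def)
qed

lemma winner_eq_Some_iff:
  "winner n m f S = Some a \<longleftrightarrow> a \<in> S \<and> (\<forall>a'\<in>S. a' \<noteq> a \<longrightarrow> Xi n m f S a' < Xi n m f S a)"
  (is "_ \<longleftrightarrow> ?W a")
proof -
  have unique: "a' = a" if "?W a" "?W a'" for a a'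
  proof (rule ccontr)
    assume "a' \<noteq> a"
    then have "Xi n m f S a' < Xi n m f S a" "Xi n m f S a < Xi n m f S a'" using that by auto
    then show False by simp
  qed
  have the_eq: "(THE c. ?W c) = a" if "?W a" for a
    using that unique by (intro the_equality) blast+
  show ?thesis
  proof
    assume "winner n m f S = Some a"
    then obtain c where "?W c" and "winner n m f S = Some (THE c. ?W c)"
      unfolding winner_def by (auto split: if_splits)
    then show "?W a" using \<open>winner n m f S = Some a\<close> the_eq by simp
  next
    assume "?W a"
    then show "winner n m f S = Some a" unfolding winner_def using the_eq by auto
  qed
qed

lemma wins_two_round_iff:
  assumes "x \<notin> B"
  shows "wins_two_round n m f A B x \<longleftrightarrow>
    winner n m f A = Some x \<and> (\<exists>b. winner n m f B = Some b \<and> Xi n m f {x, b} b < Xi n m f {x, b} x)"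
proof -
  have "b \<noteq> x" if "winner n m f B = Some b" for b
    using that assms by (auto simp: winner_eq_Some_iff)
  then show ?thesis unfolding wins_two_round_def by blast
qed

section \<open>Counting seed profiles\<close>

definition at_least_as_many :: "nat \<Rightarrow> nat \<Rightarrow> nat set \<Rightarrow> nat set \<Rightarrow> (nat \<Rightarrow> nat) set" where
  "at_least_as_many n m T U = {f \<in> seed_profiles n m. seed_count m f U \<le> seed_count m f T}"

lemma finite_at_least_as_many [simp]: "finite (at_least_as_many n m T U)"
  by (simp add: at_least_as_many_def finite_PiE)

lemma prod_seed_weights:
  fixes w :: real
  assumes "T \<inter> U = {}"
  shows "(\<Prod>j\<in>{0..<m}. if f j \<in> T then w else if f j \<in> U then 1 / w else 1)
    = w ^ seed_count m f T * (1 / w) ^ seed_count m f U"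
proof -
  have "(\<Prod>j\<in>{0..<m}. if f j \<in> T then w else if f j \<in> U then 1 / w else 1)
      = (\<Prod>j\<in>{0..<m}. w ^ (if f j \<in> T then 1 else 0) * (1 / w) ^ (if f j \<in> U then 1 else 0))"
    using assms by (intro prod.cong) auto
  also have "\<dots> = w ^ (\<Sum>j\<in>{0..<m}. if f j \<in> T then 1 else 0) * (1 / w) ^ (\<Sum>j\<in>{0..<m}. if f j \<in> U then 1 else 0)"
    by (simp only: prod.distrib power_sum)
  finally show ?thesis
    by (simp only: seed_count_def card_eq_sum sum.inter_filter[OF finite_atLeastLessThan])
qed

lemma sum_seed_weights:
  fixes w :: real
  assumes "T \<inter> U = {}" "T \<subseteq> {1..n}" "U \<subseteq> {1..n}"
  shows "(\<Sum>s\<in>{1..n}. if s \<in> T then w else if s \<in> U then 1 / w else 1)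
    = real n + real (card T) * (w - 1) - real (card U) * (1 - 1 / w)"
proof -
  have "(\<Sum>s\<in>{1..n}. if s \<in> T then w else if s \<in> U then 1 / w else 1)
      = (\<Sum>s\<in>{1..n}. 1 + (if s \<in> T then w - 1 else 0) - (if s \<in> U then 1 - 1 / w else 0))"
    using assms(1) by (intro sum.cong) auto
  also have "\<dots> = real n + real (card T) * (w - 1) - real (card U) * (1 - 1 / w)"
    using assms(2,3) by (simp add: sum.distrib sum_subtractf sum.If_cases Int_absorb2 Int_commute)
  finally show ?thesis .
qed

lemma card_at_least_as_many_le:
  fixes w :: real
  assumes TU: "T \<inter> U = {}" "T \<subseteq> {1..n}" "U \<subseteq> {1..n}" and "1 \<le> w"
  shows "real (card (at_least_as_many n m T U))
    \<le> (real n + real (card T) * (w - 1) - real (card U) * (1 - 1 / w)) ^ m"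
proof -
  define g where "g s = (if s \<in> T then w else if s \<in> U then 1 / w else 1)" for s
  have g_nonneg: "0 \<le> g s" for s using \<open>1 \<le> w\<close> by (simp add: g_def)
  have weight_ge_1: "1 \<le> (\<Prod>j\<in>{0..<m}. g (f j))" if "f \<in> at_least_as_many n m T U" for f
  proof -
    define a b where "a = seed_count m f T" and "b = seed_count m f U"
    have "b \<le> a" using that by (simp add: at_least_as_many_def a_def b_def)
    have "(\<Prod>j\<in>{0..<m}. g (f j)) = w ^ a * (1 / w) ^ b"
      unfolding g_def a_def b_def by (rule prod_seed_weights[OF TU(1)])
    also have "\<dots> = w ^ (a - b)"
      using \<open>b \<le> a\<close> \<open>1 \<le> w\<close> by (simp add: power_diff field_simps)
    finally show ?thesis using \<open>1 \<le> w\<close> by simp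
  qed
  have "real (card (at_least_as_many n m T U)) \<le> (\<Sum>f\<in>at_least_as_many n m T U. \<Prod>j\<in>{0..<m}. g (f j))"
    using sum_mono[OF weight_ge_1] by simp
  also have "\<dots> \<le> (\<Sum>f\<in>seed_profiles n m. \<Prod>j\<in>{0..<m}. g (f j))"
    by (intro sum_mono2 finite_PiE prod_nonneg g_nonneg) (auto simp: at_least_as_many_def)
  also have "\<dots> = (\<Prod>j\<in>{0..<m}. \<Sum>s\<in>{1..n}. g s)"
    by (rule prod_sum_PiE[symmetric]) auto
  also have "\<dots> = (\<Sum>s\<in>{1..n}. g s) ^ m"
    by simp
  also have "(\<Sum>s\<in>{1..n}. g s) = real n + real (card T) * (w - 1) - real (card U) * (1 - 1 / w)"
    unfolding g_def by (rule sum_seed_weights[OF TU])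
  finally show ?thesis .
qed

lemma card_at_least_as_many_le_sqrt:
  assumes TU: "T \<inter> U = {}" "T \<subseteq> {1..n}" "U \<subseteq> {1..n}"
    and t: "real (card T) \<le> t" "0 < t" "t \<le> u" "u \<le> real (card U)"
  shows "real (card (at_least_as_many n m T U)) \<le> (real n - (sqrt u - sqrt t)\<^sup>2) ^ m"
proof -
  define a b where "a = sqrt u" and "b = sqrt t"
  have "0 < b" "b \<le> a" "a\<^sup>2 = u" "b\<^sup>2 = t" using t by (auto simp: a_def b_def)
  \<comment> \<open>The weight minimising the exponential-moment bound.\<close>
  define w where "w = a / b"
  have "1 \<le> w" using \<open>0 < b\<close> \<open>b \<le> a\<close> by (simp add: w_def)
  have "card T + card U \<le> n"
    using TU card_mono[of "{1..n}" "T \<union> U"] by (simp add: card_Un_disjoint finite_subset)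
  moreover have "real n + real (card T) * (w - 1) - real (card U) * (1 - 1 / w)
      = (real n - real (card T) - real (card U)) + real (card T) * w + real (card U) / w"
    using \<open>1 \<le> w\<close> by (simp add: field_simps)
  moreover have "0 \<le> real (card T) * w" "0 \<le> real (card U) / w" using \<open>1 \<le> w\<close> by simp_all
  ultimately have base_nonneg: "0 \<le> real n + real (card T) * (w - 1) - real (card U) * (1 - 1 / w)"
    by linarith
  have "real n + real (card T) * (w - 1) - real (card U) * (1 - 1 / w)
      \<le> real n + t * (w - 1) - u * (1 - 1 / w)"
    using t \<open>1 \<le> w\<close> by (intro diff_mono add_left_mono mult_right_mono) (auto simp: field_simps)
  also have "\<dots> = real n - (a - b)\<^sup>2"
    using \<open>0 < b\<close> \<open>b \<le> a\<close> unfolding w_def \<open>a\<^sup>2 = u\<close>[symmetric] \<open>b\<^sup>2 = t\<close>[symmetric]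
    by (simp add: field_simps power2_eq_square)
  finally show ?thesis
    using card_at_least_as_many_le[OF TU \<open>1 \<le> w\<close>, of m] base_nonneg
    unfolding a_def b_def by (meson order_trans power_mono)
qed

lemma sqrt_diff_squared_le:
  fixes t u :: real
  assumes "0 \<le> t" "t \<le> u"
  shows "(sqrt u - sqrt t)\<^sup>2 \<le> u"
proof -
  have "(sqrt u - sqrt t)\<^sup>2 \<le> (sqrt u)\<^sup>2"
    using assms by (intro power_mono) auto
  then show ?thesis using assms by simp
qed

lemma preimages_PiE_if:
  assumes "T \<inter> U = {}" "K \<subseteq> {0..<m}" "f \<in> PiE {0..<m} (\<lambda>j. if j \<in> K then T else U)"
  shows "{j \<in> {0..<m}. f j \<in> T} = K" "{j \<in> {0..<m}. f j \<in> U} = {0..<m} - K"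
proof -
  have "f j \<in> T" if "j \<in> K" for j using PiE_mem[OF assms(3), of j] assms(2) that by auto
  moreover have "f j \<in> U" if "j \<in> {0..<m} - K" for j using PiE_mem[OF assms(3), of j] that by auto
  ultimately show "{j \<in> {0..<m}. f j \<in> T} = K" "{j \<in> {0..<m}. f j \<in> U} = {0..<m} - K"
    using assms(1,2) by blast+
qed

lemma card_PiE_if:
  assumes "K \<subseteq> {0..<m}"
  shows "card (PiE {0..<m} (\<lambda>j. if j \<in> K then T else U)) = card T ^ card K * card U ^ (m - card K)"
proof -
  have "card (PiE {0..<m} (\<lambda>j. if j \<in> K then T else U))
      = (\<Prod>j\<in>{0..<m}. if j \<in> K then card T else card U)"
    by (simp add: card_PiE if_distrib[of card])
  also have "\<dots> = card T ^ card K * card U ^ card ({0..<m} - K)"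
    using assms by (simp add: prod.If_cases Int_absorb1 Diff_eq)
  finally show ?thesis using assms by (simp add: card_Diff_subset finite_subset)
qed

lemma card_at_least_as_many_ge:
  assumes TU: "T \<inter> U = {}" "T \<union> U = {1..n}" and k: "m \<le> 2 * k" "k \<le> m"
  shows "(m choose k) * card T ^ k * card U ^ (m - k) \<le> card (at_least_as_many n m T U)"
proof -
  define Fam where "Fam = {K. K \<subseteq> {0..<m} \<and> card K = k}"
  define Q where "Q K = PiE {0..<m} (\<lambda>j. if j \<in> K then T else U)" for K
  have "finite T" "finite U" using TU(2) by (metis finite_Un finite_atLeastAtMost)+
  have Q_subset: "Q K \<subseteq> at_least_as_many n m T U" if "K \<in> Fam" for K
  proof
    fix f assume f: "f \<in> Q K"
    have "K \<subseteq> {0..<m}" "card K = k" using that by (auto simp: Fam_def)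
    then have "seed_count m f T = k" "seed_count m f U = m - k"
      using preimages_PiE_if[OF TU(1) _ f[unfolded Q_def]]
      by (simp_all add: seed_count_def card_Diff_subset finite_subset)
    moreover have "f \<in> seed_profiles n m" using f TU(2) by (auto simp: Q_def PiE_iff split: if_splits)
    ultimately show "f \<in> at_least_as_many n m T U" using k by (simp add: at_least_as_many_def)
  qed
  have Q_disjoint: "Q K \<inter> Q K' = {}" if "K \<in> Fam" "K' \<in> Fam" "K \<noteq> K'" for K K'
  proof -
    have "K \<subseteq> {0..<m}" "K' \<subseteq> {0..<m}" using that by (auto simp: Fam_def)
    have "K = K'" if "f \<in> Q K" "f \<in> Q K'" for f
      using preimages_PiE_if(1)[OF TU(1) \<open>K \<subseteq> {0..<m}\<close>, of f]
        preimages_PiE_if(1)[OF TU(1) \<open>K' \<subseteq> {0..<m}\<close>, of f] that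
      unfolding Q_def by simp
    then show ?thesis using \<open>K \<noteq> K'\<close> by blast
  qed
  have card_Q: "card (Q K) = card T ^ k * card U ^ (m - k)" if "K \<in> Fam" for K
    using that card_PiE_if[of K m T U] by (simp add: Fam_def Q_def)
  have "finite Fam" by (simp add: Fam_def)
  have "finite (Q K)" for K
    using \<open>finite T\<close> \<open>finite U\<close> by (simp add: Q_def finite_PiE)
  have "(m choose k) * card T ^ k * card U ^ (m - k) = (\<Sum>K\<in>Fam. card (Q K))"
    using card_Q n_subsets[of "{0..<m}" k] by (simp add: Fam_def)
  also have "\<dots> = card (\<Union> (Q ` Fam))"
    using \<open>finite Fam\<close> \<open>\<And>K. finite (Q K)\<close> Q_disjoint by (intro card_UN_disjoint[symmetric]) auto
  also have "\<dots> \<le> card (at_least_as_many n m T U)"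
    using Q_subset by (intro card_mono[OF finite_at_least_as_many]) blast
  finally show ?thesis .
qed

lemma binomial_central_lower:
  fixes x :: real
  assumes "0 \<le> x" "x \<le> 1"
  shows "x * (2 * sqrt (x * (1 - x))) ^ m / (real m + 1)
    \<le> real (m choose (m - m div 2)) * x ^ (m - m div 2) * (1 - x) ^ (m div 2)"
proof -
  define h y where "h = m div 2" and "y = x * (1 - x)"
  have "0 \<le> y" "y \<le> 1" using assms by (auto simp: y_def mult_le_one)
  have "(2::nat) ^ m = (\<Sum>k\<le>m. m choose k)" by (simp add: choose_row_sum)
  also have "\<dots> \<le> (\<Sum>k\<le>m. m choose h)" unfolding h_def by (intro sum_mono binomial_maximum)
  finally have "real (2 ^ m) \<le> real ((m + 1) * (m choose h))" by (simp only: of_nat_le_iff) simp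
  then have central: "2 ^ m / (real m + 1) \<le> real (m choose h)" by (simp add: field_simps)
  have "m - 2 * h \<le> 1" unfolding h_def using mult_div_mod_eq[of 2 m] mod_less_divisor[of 2 m] by linarith
  then have "x \<le> x ^ (m - 2 * h)" using assms by (cases "m - 2 * h") auto
  have "2 * h \<le> m" by (simp add: h_def)
  moreover have "sqrt y ^ (2 * h) = y ^ h" using \<open>0 \<le> y\<close> by (simp add: power_mult)
  ultimately have "sqrt y ^ m = y ^ h * sqrt y ^ (m - 2 * h)"
    by (metis le_add_diff_inverse power_add)
  also have "\<dots> \<le> y ^ h" using \<open>0 \<le> y\<close> \<open>y \<le> 1\<close> by (simp add: mult_left_le power_le_one)
  finally have "sqrt y ^ m \<le> y ^ h" .
  have "x * (2 * sqrt y) ^ m / (real m + 1) = 2 ^ m / (real m + 1) * (x * sqrt y ^ m)"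
    by (simp add: power_mult_distrib)
  also have "\<dots> \<le> real (m choose h) * (x * y ^ h)"
    using \<open>sqrt y ^ m \<le> y ^ h\<close> assms \<open>0 \<le> y\<close>
    by (intro mult_mono[OF central] mult_left_mono) auto
  also have "\<dots> \<le> real (m choose h) * (x ^ (m - 2 * h) * y ^ h)"
    using \<open>x \<le> x ^ (m - 2 * h)\<close> \<open>0 \<le> y\<close>
    by (intro mult_left_mono[OF mult_right_mono] zero_le_power) simp_all
  also have "x ^ (m - 2 * h) * y ^ h = x ^ (m - h) * (1 - x) ^ h"
  proof -
    have "x ^ (m - 2 * h) * x ^ h = x ^ (m - h)"
      using \<open>2 * h \<le> m\<close> by (simp flip: power_add)
    then show ?thesis by (simp add: y_def power_mult_distrib mult.assoc[symmetric])
  qed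
  also have "m choose h = m choose (m - h)" by (rule binomial_symmetric) (simp add: h_def)
  finally show ?thesis unfolding y_def h_def by (simp only: mult.assoc)
qed

lemma card_not_winner_le:
  assumes S: "S \<subseteq> {1..n}" "c0 \<in> S" and u: "2 \<le> u" "u \<le> real (card (electorate n S c0))"
    and gaps: "\<And>c. c \<in> S \<Longrightarrow> c \<noteq> c0 \<Longrightarrow> \<exists>d\<in>S. d < c \<and> c \<le> d + 2"
  shows "real (card {f \<in> seed_profiles n m. winner n m f S \<noteq> Some c0})
    \<le> real (card S - 1) * (real n - (sqrt u - sqrt 2)\<^sup>2) ^ m"
proof -
  let ?E = "electorate n S" and ?bound = "(real n - (sqrt u - sqrt 2)\<^sup>2) ^ m"
  have "finite S" using S(1) finite_subset by blast
  have "{f \<in> seed_profiles n m. winner n m f S \<noteq> Some c0}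
      \<subseteq> (\<Union>c\<in>S - {c0}. at_least_as_many n m (?E c) (?E c0))"
  proof (rule subsetI, rule ccontr)
    fix f assume f: "f \<in> {f \<in> seed_profiles n m. winner n m f S \<noteq> Some c0}"
      and "f \<notin> (\<Union>c\<in>S - {c0}. at_least_as_many n m (?E c) (?E c0))"
    then have "Xi n m f S c < Xi n m f S c0" if "c \<in> S" "c \<noteq> c0" for c
      using that by (auto simp: at_least_as_many_def Xi_eq_seed_count not_le)
    then have "winner n m f S = Some c0" unfolding winner_eq_Some_iff using S(2) by blast
    then show False using f by simp
  qed
  then have "card {f \<in> seed_profiles n m. winner n m f S \<noteq> Some c0}
      \<le> card (\<Union>c\<in>S - {c0}. at_least_as_many n m (?E c) (?E c0))"
    using \<open>finite S\<close> by (intro card_mono) auto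
  also have "\<dots> \<le> (\<Sum>c\<in>S - {c0}. card (at_least_as_many n m (?E c) (?E c0)))"
    using \<open>finite S\<close> by (intro card_UN_le) simp
  finally have "real (card {f \<in> seed_profiles n m. winner n m f S \<noteq> Some c0})
      \<le> (\<Sum>c\<in>S - {c0}. real (card (at_least_as_many n m (?E c) (?E c0))))"
    unfolding of_nat_sum[symmetric] of_nat_le_iff .
  also have "\<dots> \<le> (\<Sum>c\<in>S - {c0}. ?bound)"
  proof (rule sum_mono)
    fix c assume c: "c \<in> S - {c0}"
    then obtain d where "d \<in> S" "d < c" "c \<le> d + 2" using gaps by blast
    then have "real (card (?E c)) \<le> 2" using card_electorate_le[OF S(1), of d c] by simp
    moreover have "?E c \<inter> ?E c0 = {}" "?E c \<subseteq> {1..n}" "?E c0 \<subseteq> {1..n}"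
      using c by (auto simp: electorate_def)
    ultimately show "real (card (at_least_as_many n m (?E c) (?E c0))) \<le> ?bound"
      using u by (intro card_at_least_as_many_le_sqrt) auto
  qed
  also have "\<dots> = real (card S - 1) * ?bound"
    using S(2) \<open>finite S\<close> by simp
  finally show ?thesis .
qed

lemma pair_not_less_eq_at_least_as_many:
  assumes "1 < b" "b \<le> n"
  shows "{f \<in> seed_profiles n m. \<not> Xi n m f {1, b} b < Xi n m f {1, b} 1}
    = at_least_as_many n m {2..b} ({1..n} - {2..b})"
proof -
  have "Xi n m f {1, b} b = seed_count m f {2..b}"
    "Xi n m f {1, b} 1 = seed_count m f ({1..n} - {2..b})" if "f \<in> seed_profiles n m" for f
    using that by (simp_all only: Xi_eq_seed_count electorate_pair[OF assms])
  then show ?thesis by (auto simp: at_least_as_many_def not_less)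
qed

section \<open>The partition\<close>

definition losing_profiles :: "nat \<Rightarrow> nat \<Rightarrow> nat \<Rightarrow> (nat \<Rightarrow> nat) set" where
  "losing_profiles n m l = {f \<in> seed_profiles n m. \<not> wins_two_round n m f (Apart n l) (Bpart n l) 1}"

lemma one_minus_p1_eq:
  assumes "0 < n"
  shows "1 - p1 n m l = real (card (losing_profiles n m l)) / real n ^ m"
proof -
  let ?W = "{f \<in> seed_profiles n m. wins_two_round n m f (Apart n l) (Bpart n l) 1}"
  have "losing_profiles n m l = seed_profiles n m - ?W" by (auto simp: losing_profiles_def)
  moreover have "card ?W \<le> card (seed_profiles n m)" by (intro card_mono finite_PiE) auto
  ultimately have "real (card (losing_profiles n m l)) = real n ^ m - real (card ?W)"
    by (simp add: card_Diff_subset finite_PiE card_PiE)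
  then show ?thesis using assms by (simp add: p1_def field_simps)
qed

(* The first term bounds losing a first-round group (l+1 seeds against a rival with at most two),
   the second losing the final (l seeds against n-l). *)
definition loss_rate :: "nat \<Rightarrow> nat \<Rightarrow> real" where
  "loss_rate n l = max (1 - (sqrt (real (l + 1) / real n) - sqrt (2 / real n))\<^sup>2)
                       (1 - (sqrt (real (n - l) / real n) - sqrt (real l / real n))\<^sup>2)"

lemma scaled_sqrt_diff:
  assumes "0 < n"
  shows "(real n - (sqrt a - sqrt b)\<^sup>2) / real n = 1 - (sqrt (a / real n) - sqrt (b / real n))\<^sup>2"
proof -
  have "sqrt (a / real n) - sqrt (b / real n) = (sqrt a - sqrt b) / sqrt (real n)"
    by (simp add: real_sqrt_divide diff_divide_distrib)
  then have "(sqrt (a / real n) - sqrt (b / real n))\<^sup>2 = (sqrt a - sqrt b)\<^sup>2 / real n"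
    using assms by (simp add: power_divide)
  then show ?thesis using assms by (simp add: diff_divide_distrib)
qed

locale two_round_partition =
  fixes n l :: nat
  assumes even_n: "even n" and l_ge_2: "2 \<le> l" and l_le: "2 * l + 2 \<le> n"
begin

abbreviation "A \<equiv> Apart n l"
abbreviation "B \<equiv> Bpart n l"

lemma Apart_iff: "c \<in> A \<longleftrightarrow> 1 \<le> c \<and> c \<le> l \<or> l < c \<and> c \<le> n - l \<and> even (c - l)"
proof -
  have half: "2 * ((n - 2 * l) div 2) = n - 2 * l" using even_n by (simp add: even_two_times_div_two)
  show ?thesis
  proof
    assume "c \<in> A"
    then consider "1 \<le> c \<and> c \<le> l" | i where "c = l + 2 * i" "1 \<le> i" "i \<le> (n - 2 * l) div 2"
      unfolding Apart_def by auto
    then show "1 \<le> c \<and> c \<le> l \<or> l < c \<and> c \<le> n - l \<and> even (c - l)"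
    proof cases
      case 2
      then have "2 * i \<le> n - 2 * l" using half by linarith
      then show ?thesis using 2 by auto
    qed blast
  next
    assume c: "1 \<le> c \<and> c \<le> l \<or> l < c \<and> c \<le> n - l \<and> even (c - l)"
    show "c \<in> A"
    proof (cases "c \<le> l")
      case False
      with c have "l < c" "c \<le> n - l" "even (c - l)" by auto
      from \<open>even (c - l)\<close> obtain i where "c - l = 2 * i" by (rule evenE)
      then have "c = l + 2 * i" "1 \<le> i" "i \<le> (n - 2 * l) div 2"
        using \<open>l < c\<close> \<open>c \<le> n - l\<close> by (auto simp: less_eq_div_iff_mult_less_eq)
      then show ?thesis unfolding Apart_def by blast
    qed (use c in \<open>auto simp: Apart_def\<close>)
  qed
qed

lemma Bpart_iff: "c \<in> B \<longleftrightarrow> l < c \<and> c \<le> n \<and> (c \<le> n - l \<longrightarrow> odd (c - l))"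
  using l_le by (auto simp: Bpart_def Apart_iff)

lemma Apart_subset: "A \<subseteq> {1..n - l}"
  using l_le by (auto simp: Apart_iff)

lemma Bpart_subset: "B \<subseteq> {l<..n}"
  by (auto simp: Bpart_iff)

lemma Apart_subset_atLeastAtMost: "A \<subseteq> {1..n}"
  using Apart_subset by (rule order_trans) auto

lemma Bpart_subset_atLeastAtMost: "B \<subseteq> {1..n}"
  by (auto simp: Bpart_def)

lemma card_Apart_Bpart: "card A + card B = n"
proof -
  have "A \<union> B = {1..n}" "A \<inter> B = {}" using Apart_subset_atLeastAtMost by (auto simp: Bpart_def)
  then show ?thesis using card_Un_disjoint[of A B] finite_subset[OF Apart_subset_atLeastAtMost]
    by (metis card_atLeastAtMost diff_Suc_1 finite_Un finite_atLeastAtMost)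
qed

lemma one_in_Apart: "1 \<in> A" and two_in_Apart: "2 \<in> A" and n_minus_l_in_Apart: "n - l \<in> A"
  and one_notin_Bpart: "1 \<notin> B" and succ_l_in_Bpart: "l + 1 \<in> B"
  using l_ge_2 l_le even_n by (auto simp: Apart_iff Bpart_iff)

lemma Apart_gap:
  assumes "c \<in> A" "c \<noteq> 1"
  shows "\<exists>d\<in>A. d < c \<and> c \<le> d + 2"
proof (cases "c \<le> l")
  case True
  then have "c - 1 \<in> A" using assms by (auto simp: Apart_iff)
  moreover have "1 \<le> c" using assms(1) Apart_subset by auto
  ultimately show ?thesis using assms(2) by (intro bexI[of _ "c - 1"]) auto
next
  case False
  then have "l < c" "c \<le> n - l" "even (c - l)" using assms by (auto simp: Apart_iff)
  from \<open>even (c - l)\<close> obtain k where "c - l = 2 * k" by (rule evenE)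
  with \<open>l < c\<close> have "1 \<le> k" "c - 2 - l = 2 * (k - 1)" by auto
  then have "c - 2 \<in> A"
    using \<open>c - l = 2 * k\<close> \<open>l < c\<close> \<open>c \<le> n - l\<close> l_ge_2 by (cases "k = 1") (auto simp: Apart_iff)
  then show ?thesis using \<open>l < c\<close> l_ge_2 by (intro bexI[of _ "c - 2"]) auto
qed

lemma Bpart_gap:
  assumes "c \<in> B" "c \<noteq> l + 1"
  shows "\<exists>d\<in>B. d < c \<and> c \<le> d + 2"
proof -
  have c: "l < c" "c \<le> n" "c \<le> n - l \<Longrightarrow> odd (c - l)" using assms by (auto simp: Bpart_iff)
  consider "c \<le> n - l" | "c = n - l + 1" | "n - l + 1 < c" by linarith
  then show ?thesis
  proof cases
    case 1
    from c(3)[OF 1] obtain k where "c - l = 2 * k + 1" by (rule oddE)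
    with c(1) assms(2) have "1 \<le> k" "c - 2 - l = 2 * (k - 1) + 1" by auto
    then have "c - 2 \<in> B" using c(2) by (auto simp: Bpart_iff)
    then show ?thesis using \<open>1 \<le> k\<close> \<open>c - l = 2 * k + 1\<close> by (intro bexI[of _ "c - 2"]) auto
  next
    case 2
    from even_n obtain j where "n = 2 * j" by (rule evenE)
    with 2 l_le have "c - 2 - l = 2 * (j - l - 1) + 1" by auto
    then have "c - 2 \<in> B" using 2 l_le by (auto simp: Bpart_iff)
    then show ?thesis using 2 l_le by (intro bexI[of _ "c - 2"]) auto
  next
    case 3
    then have "c - 1 \<in> B" using c(2) l_le by (auto simp: Bpart_iff)
    then show ?thesis using 3 by (intro bexI[of _ "c - 1"]) auto
  qed
qed

lemma electorate_Apart_one: "electorate n A 1 = insert 1 {n - l<..n}"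
proof -
  have "vote n s A = 1 \<longleftrightarrow> s = 1 \<or> n - l < s" if s: "s \<in> {1..n}" for s
  proof
    assume vote: "vote n s A = 1"
    show "s = 1 \<or> n - l < s"
    proof (rule ccontr)
      assume "\<not> (s = 1 \<or> n - l < s)"
      then have "1 < s" "s \<le> n - l" using s by auto
      with vote_wraps[OF Apart_subset_atLeastAtMost s vote \<open>1 < s\<close> n_minus_l_in_Apart]
      show False by simp
    qed
  next
    assume "s = 1 \<or> n - l < s"
    then show "vote n s A = 1"
    proof
      assume "s = 1"
      then show ?thesis using Apart_subset
        by (intro vote_eq_next[OF Apart_subset_atLeastAtMost s one_in_Apart]) auto
    next
      assume "n - l < s"
      then show ?thesis using Apart_subset
        by (intro vote_eq_wrap[OF Apart_subset_atLeastAtMost s one_in_Apart]) fastforce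
    qed
  qed
  then show ?thesis using l_le by (auto simp: electorate_def)
qed

lemma electorate_Bpart_succ: "{1..l + 1} \<subseteq> electorate n B (l + 1)"
proof
  fix s assume s: "s \<in> {1..l + 1}"
  then have "s \<in> {1..n}" using l_le by auto
  then have "vote n s B = l + 1" using s Bpart_subset
    by (intro vote_eq_next[OF Bpart_subset_atLeastAtMost _ succ_l_in_Bpart]) auto
  then show "s \<in> electorate n B (l + 1)" using \<open>s \<in> {1..n}\<close> by (simp add: electorate_def)
qed

lemma losing_profiles_subset:
  "losing_profiles n m l \<subseteq> {f \<in> seed_profiles n m. winner n m f A \<noteq> Some 1}
    \<union> {f \<in> seed_profiles n m. winner n m f B \<noteq> Some (l + 1)}
    \<union> at_least_as_many n m {2..l + 1} ({1..n} - {2..l + 1})"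
    (is "_ \<subseteq> ?LA \<union> ?LB \<union> ?F")
proof (rule subsetI, rule ccontr)
  fix f assume f: "f \<in> losing_profiles n m l" "f \<notin> ?LA \<union> ?LB \<union> ?F"
  then have "f \<in> seed_profiles n m" by (simp add: losing_profiles_def)
  with f(2) have "winner n m f A = Some 1" "winner n m f B = Some (l + 1)" "f \<notin> ?F" by auto
  moreover have "{f \<in> seed_profiles n m. \<not> Xi n m f {1, l + 1} (l + 1) < Xi n m f {1, l + 1} 1} = ?F"
    using l_ge_2 l_le by (intro pair_not_less_eq_at_least_as_many) auto
  ultimately have "winner n m f A = Some 1" "winner n m f B = Some (l + 1)"
    "Xi n m f {1, l + 1} (l + 1) < Xi n m f {1, l + 1} 1"
    using \<open>f \<in> seed_profiles n m\<close> by blast+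
  then have "wins_two_round n m f A B 1" using wins_two_round_iff[OF one_notin_Bpart] by blast
  then show False using f(1) by (simp add: losing_profiles_def)
qed

lemma card_losing_le:
  "real (card (losing_profiles n m l))
    \<le> real n * (real n - (sqrt (real (l + 1)) - sqrt 2)\<^sup>2) ^ m
      + (real n - (sqrt (real (n - l)) - sqrt (real l))\<^sup>2) ^ m"
proof -
  define Q1 Q2 where "Q1 = real n - (sqrt (real (l + 1)) - sqrt 2)\<^sup>2"
    and "Q2 = real n - (sqrt (real (n - l)) - sqrt (real l))\<^sup>2"
  let ?LA = "{f \<in> seed_profiles n m. winner n m f A \<noteq> Some 1}"
  let ?LB = "{f \<in> seed_profiles n m. winner n m f B \<noteq> Some (l + 1)}"
  let ?F = "at_least_as_many n m {2..l + 1} ({1..n} - {2..l + 1})"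
  have "card (losing_profiles n m l) \<le> card (?LA \<union> ?LB \<union> ?F)"
    using losing_profiles_subset by (intro card_mono) (simp_all add: finite_PiE)
  also have "\<dots> \<le> card ?LA + card ?LB + card ?F"
    by (meson card_Un_le add_le_mono order_trans le_refl)
  finally have "real (card (losing_profiles n m l)) \<le> real (card ?LA) + real (card ?LB) + real (card ?F)"
    by linarith
  moreover have "real (card ?LA) \<le> real (card A - 1) * Q1 ^ m"
  proof -
    have "card (electorate n A 1) = l + 1" unfolding electorate_Apart_one using l_le by simp
    then show ?thesis unfolding Q1_def using l_ge_2 Apart_gap
      by (intro card_not_winner_le[OF Apart_subset_atLeastAtMost one_in_Apart]) auto
  qed
  moreover have "real (card ?LB) \<le> real (card B - 1) * Q1 ^ m"
  proof -
    have "l + 1 \<le> card (electorate n B (l + 1))"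
      using card_mono[OF finite_electorate electorate_Bpart_succ] by simp
    then show ?thesis unfolding Q1_def using l_ge_2 Bpart_gap
      by (intro card_not_winner_le[OF Bpart_subset_atLeastAtMost succ_l_in_Bpart]) auto
  qed
  moreover have "real (card ?F) \<le> Q2 ^ m"
  proof -
    have "card {2..l + 1} = l" "card ({1..n} - {2..l + 1}) = n - l"
      using l_le by (simp_all add: card_Diff_subset)
    then show ?thesis unfolding Q2_def using l_ge_2 l_le
      by (intro card_at_least_as_many_le_sqrt) auto
  qed
  moreover have "0 \<le> Q1"
    using sqrt_diff_squared_le[of 2 "real (l + 1)"] l_ge_2 l_le by (simp add: Q1_def)
  then have "real (card A - 1) * Q1 ^ m + real (card B - 1) * Q1 ^ m \<le> real n * Q1 ^ m"
    using card_Apart_Bpart by (simp add: distrib_right[symmetric] mult_right_mono)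
  ultimately show ?thesis unfolding Q1_def Q2_def by linarith
qed

lemma card_losing_ge_no_votes: "real (n - l - 1) ^ m \<le> real (card (losing_profiles n m l))"
proof -
  have "{0..<m} \<rightarrow>\<^sub>E {2..n - l} \<subseteq> losing_profiles n m l"
  proof
    fix f assume f: "f \<in> {0..<m} \<rightarrow>\<^sub>E {2..n - l}"
    then have "f \<in> seed_profiles n m" by (auto simp: PiE_iff)
    moreover have "f j \<notin> electorate n A 1" if "j \<in> {0..<m}" for j
      using PiE_mem[OF f that] unfolding electorate_Apart_one by auto
    then have "seed_count m f (electorate n A 1) = 0" by (simp add: seed_count_def)
    then have "Xi n m f A 1 = 0" using Xi_eq_seed_count[OF \<open>f \<in> seed_profiles n m\<close>] by simp
    have "winner n m f A \<noteq> Some 1"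
    proof
      assume "winner n m f A = Some 1"
      then have "Xi n m f A 2 < Xi n m f A 1" using two_in_Apart by (simp add: winner_eq_Some_iff)
      then show False using \<open>Xi n m f A 1 = 0\<close> by simp
    qed
    ultimately show "f \<in> losing_profiles n m l"
      unfolding losing_profiles_def wins_two_round_iff[OF one_notin_Bpart] by blast
  qed
  then have "card ({0..<m} \<rightarrow>\<^sub>E {2..n - l}) \<le> card (losing_profiles n m l)"
    by (intro card_mono) (simp_all add: losing_profiles_def finite_PiE)
  then show ?thesis by (simp add: card_PiE flip: of_nat_power)
qed

lemma at_least_as_many_final_round_subset:
  "at_least_as_many n m {2..l + 1} ({1..n} - {2..l + 1}) \<subseteq> losing_profiles n m l"
  (is "?F \<subseteq> _")
proof
  fix f assume "f \<in> ?F"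
  then have f: "f \<in> seed_profiles n m"
    "seed_count m f ({1..n} - {2..l + 1}) \<le> seed_count m f {2..l + 1}"
    by (simp_all add: at_least_as_many_def)
  have not_final: "\<not> Xi n m f {1, b} b < Xi n m f {1, b} 1" if "b \<in> B" for b
  proof -
    have "l < b" "b \<le> n" using that Bpart_subset by auto
    have "seed_count m f ({1..n} - {2..b}) \<le> seed_count m f ({1..n} - {2..l + 1})"
      "seed_count m f {2..l + 1} \<le> seed_count m f {2..b}"
      using \<open>l < b\<close> by (auto intro: seed_count_mono)
    then have "f \<in> at_least_as_many n m {2..b} ({1..n} - {2..b})"
      using f by (simp add: at_least_as_many_def)
    moreover have "1 < b" using \<open>l < b\<close> l_ge_2 by simp
    ultimately show ?thesis using pair_not_less_eq_at_least_as_many[OF _ \<open>b \<le> n\<close>, of m] by blast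
  qed
  have "\<not> wins_two_round n m f A B 1"
  proof
    assume "wins_two_round n m f A B 1"
    then obtain b where "winner n m f B = Some b" "Xi n m f {1, b} b < Xi n m f {1, b} 1"
      using wins_two_round_iff[OF one_notin_Bpart] by blast
    moreover have "b \<in> B" using \<open>winner n m f B = Some b\<close> by (simp add: winner_eq_Some_iff)
    ultimately show False using not_final by blast
  qed
  then show "f \<in> losing_profiles n m l" using f(1) by (simp add: losing_profiles_def)
qed

lemma card_losing_ge_final_round:
  assumes "m \<le> 2 * k" "k \<le> m"
  shows "(m choose k) * l ^ k * (n - l) ^ (m - k) \<le> card (losing_profiles n m l)"
proof -
  have "card {2..l + 1} = l" "card ({1..n} - {2..l + 1}) = n - l"
    using l_le by (simp_all add: card_Diff_subset)
  then have "(m choose k) * l ^ k * (n - l) ^ (m - k)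
      = (m choose k) * card {2..l + 1} ^ k * card ({1..n} - {2..l + 1}) ^ (m - k)"
    by simp
  also have "\<dots> \<le> card (at_least_as_many n m {2..l + 1} ({1..n} - {2..l + 1}))"
    using assms l_le by (intro card_at_least_as_many_ge) auto
  also have "\<dots> \<le> card (losing_profiles n m l)"
    by (rule card_mono[OF _ at_least_as_many_final_round_subset]) (simp add: losing_profiles_def finite_PiE)
  finally show ?thesis .
qed

lemma one_minus_p1_le: "1 - p1 n m l \<le> (real n + 1) * loss_rate n l ^ m"
proof -
  define Q1 Q2 where "Q1 = real n - (sqrt (real (l + 1)) - sqrt 2)\<^sup>2"
    and "Q2 = real n - (sqrt (real (n - l)) - sqrt (real l))\<^sup>2"
  have "0 < n" using l_le by simp
  have "0 \<le> Q1" "0 \<le> Q2" unfolding Q1_def Q2_def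
    using sqrt_diff_squared_le[of 2 "real (l + 1)"] sqrt_diff_squared_le[of "real l" "real (n - l)"]
      l_ge_2 l_le by auto
  have "loss_rate n l = max (Q1 / real n) (Q2 / real n)"
    using \<open>0 < n\<close> by (simp add: loss_rate_def Q1_def Q2_def scaled_sqrt_diff)
  then have "(Q1 / real n) ^ m \<le> loss_rate n l ^ m" "(Q2 / real n) ^ m \<le> loss_rate n l ^ m"
    using \<open>0 \<le> Q1\<close> \<open>0 \<le> Q2\<close> by (auto intro!: power_mono)
  have "1 - p1 n m l = real (card (losing_profiles n m l)) / real n ^ m"
    using \<open>0 < n\<close> by (rule one_minus_p1_eq)
  also have "\<dots> \<le> (real n * Q1 ^ m + Q2 ^ m) / real n ^ m"
    using card_losing_le unfolding Q1_def Q2_def by (simp add: divide_right_mono)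
  also have "\<dots> = real n * (Q1 / real n) ^ m + (Q2 / real n) ^ m"
    by (simp add: power_divide add_divide_distrib)
  also have "\<dots> \<le> real n * loss_rate n l ^ m + loss_rate n l ^ m"
    using \<open>(Q1 / real n) ^ m \<le> _\<close> \<open>(Q2 / real n) ^ m \<le> _\<close> by (simp add: add_mono mult_left_mono)
  finally show ?thesis by (simp add: algebra_simps)
qed

lemma one_minus_p1_ge_no_votes: "(1 - real l / real n - 1 / real n) ^ m \<le> 1 - p1 n m l"
proof -
  have "0 < n" using l_le by simp
  have "1 - real l / real n - 1 / real n = real (n - l - 1) / real n"
    using \<open>0 < n\<close> l_le by (simp add: field_simps)
  then have "(1 - real l / real n - 1 / real n) ^ m = real (n - l - 1) ^ m / real n ^ m"
    by (simp add: power_divide)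
  also have "\<dots> \<le> real (card (losing_profiles n m l)) / real n ^ m"
    by (rule divide_right_mono[OF card_losing_ge_no_votes]) simp
  also have "\<dots> = 1 - p1 n m l" using \<open>0 < n\<close> by (rule one_minus_p1_eq[symmetric])
  finally show ?thesis .
qed

lemma one_minus_p1_ge_final_round:
  defines "x \<equiv> real l / real n"
  shows "x * (2 * sqrt (x * (1 - x))) ^ m / (real m + 1) \<le> 1 - p1 n m l"
proof -
  define h k where "h = m div 2" and "k = m - m div 2"
  have "0 < n" using l_le by simp
  have "0 \<le> x" "x \<le> 1" "1 - x = real (n - l) / real n"
    using \<open>0 < n\<close> l_le by (auto simp: x_def field_simps)
  have "x * (2 * sqrt (x * (1 - x))) ^ m / (real m + 1) \<le> real (m choose k) * x ^ k * (1 - x) ^ h"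
    unfolding h_def k_def by (rule binomial_central_lower[OF \<open>0 \<le> x\<close> \<open>x \<le> 1\<close>])
  also have "\<dots> = real ((m choose k) * l ^ k * (n - l) ^ h) / real n ^ m"
  proof -
    have "real n ^ k * real n ^ h = real n ^ m" by (simp add: h_def k_def flip: power_add)
    then show ?thesis unfolding \<open>1 - x = _\<close> unfolding x_def by (simp add: power_divide)
  qed
  also have "\<dots> \<le> real (card (losing_profiles n m l)) / real n ^ m"
  proof -
    have "m \<le> 2 * k" "k \<le> m" unfolding k_def using times_div_less_eq_dividend[of 2 m] by linarith+
    then have "(m choose k) * l ^ k * (n - l) ^ (m - k) \<le> card (losing_profiles n m l)"
      by (rule card_losing_ge_final_round)
    moreover have "m - k = h" by (simp add: h_def k_def)
    ultimately have "(m choose k) * l ^ k * (n - l) ^ h \<le> card (losing_profiles n m l)" by simp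
    then have "real ((m choose k) * l ^ k * (n - l) ^ h) \<le> real (card (losing_profiles n m l))"
      by (rule of_nat_mono)
    then show ?thesis by (rule divide_right_mono) simp
  qed
  also have "\<dots> = 1 - p1 n m l" using \<open>0 < n\<close> by (rule one_minus_p1_eq[symmetric])
  finally show ?thesis .
qed

end

section \<open>Asymptotics\<close>

definition subexponential :: "(nat \<Rightarrow> real) \<Rightarrow> (nat \<Rightarrow> nat) \<Rightarrow> bool" where
  "subexponential C m \<longleftrightarrow>
     eventually (\<lambda>k. 0 < C k) sequentially \<and> ((\<lambda>k. ln (C k) / real (m k)) \<longlongrightarrow> 0) sequentially"

lemma eventually_subexponential_power_less:
  assumes C: "subexponential C m" and m: "filterlim m at_top sequentially"
    and b: "b \<longlonglongrightarrow> b0" "0 < b0" "b0 < a"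
  shows "eventually (\<lambda>k. C k * b k ^ m k < a ^ m k) sequentially"
proof -
  have "(\<lambda>k. ln a - ln (b k) - ln (C k) / real (m k)) \<longlonglongrightarrow> ln a - ln b0 - 0"
    using C b by (intro tendsto_intros) (auto simp: subexponential_def)
  moreover have "0 < ln a - ln b0 - 0" using b by simp
  ultimately have "eventually (\<lambda>k. 0 < ln a - ln (b k) - ln (C k) / real (m k)) sequentially"
    by (rule order_tendstoD(1))
  then have "eventually (\<lambda>k. ln (C k) / real (m k) < ln a - ln (b k)) sequentially"
    by (rule eventually_mono) simp
  moreover have "eventually (\<lambda>k. 0 < b k) sequentially" using order_tendstoD(1)[OF b(1,2)] .
  moreover have "eventually (\<lambda>k. 0 < C k) sequentially" using C by (simp add: subexponential_def)
  moreover have "eventually (\<lambda>k. 1 \<le> m k) sequentially" using m by (simp add: filterlim_at_top)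
  ultimately show ?thesis
  proof eventually_elim
    case (elim k)
    then have "ln (C k) < real (m k) * (ln a - ln (b k))" by (simp add: pos_divide_less_eq mult.commute)
    then have "ln (C k * b k ^ m k) < ln (a ^ m k)"
      using elim b by (simp add: ln_mult ln_realpow algebra_simps)
    then show ?case using elim b by simp
  qed
qed

lemma subexponential_const:
  assumes "0 < c" and m: "filterlim m at_top sequentially"
  shows "subexponential (\<lambda>_. c) m"
proof -
  have "(\<lambda>k. ln c / real (m k)) \<longlonglongrightarrow> 0"
    using filterlim_compose[OF filterlim_real_sequentially m]
    by (intro tendsto_divide_0[OF tendsto_const] filterlim_at_top_imp_at_infinity)
  then show ?thesis using \<open>0 < c\<close> by (simp add: subexponential_def)
qed

lemma subexponential_mult:
  assumes C: "subexponential C m" and D: "subexponential D m"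
  shows "subexponential (\<lambda>k. C k * D k) m"
proof -
  have pos: "eventually (\<lambda>k. 0 < C k \<and> 0 < D k) sequentially"
    using C D by (simp add: subexponential_def eventually_conj)
  have "(\<lambda>k. ln (C k) / real (m k) + ln (D k) / real (m k)) \<longlonglongrightarrow> 0 + 0"
    using C D by (intro tendsto_add) (simp_all add: subexponential_def)
  moreover have "eventually (\<lambda>k. ln (C k) / real (m k) + ln (D k) / real (m k)
      = ln (C k * D k) / real (m k)) sequentially"
    using pos by eventually_elim (simp add: ln_mult add_divide_distrib)
  ultimately have "(\<lambda>k. ln (C k * D k) / real (m k)) \<longlonglongrightarrow> 0"
    by (simp add: Lim_transform_eventually)
  moreover have "eventually (\<lambda>k. 0 < C k * D k) sequentially"
    using pos by eventually_elim simp
  ultimately show ?thesis by (simp add: subexponential_def)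
qed

lemma subexponential_succ:
  assumes ln_n: "(\<lambda>k. ln (real (n k)) / real (m k)) \<longlonglongrightarrow> 0" and n: "filterlim n at_top sequentially"
  shows "subexponential (\<lambda>k. real (n k) + 1) m"
proof -
  have "eventually (\<lambda>k. 2 \<le> n k) sequentially" using n by (simp add: filterlim_at_top)
  then have "eventually (\<lambda>k. 0 \<le> ln (real (n k) + 1) / real (m k)
      \<and> ln (real (n k) + 1) / real (m k) \<le> 2 * (ln (real (n k)) / real (m k))) sequentially"
  proof eventually_elim
    case (elim k)
    define x where "x = real (n k)"
    have "2 \<le> x" using elim by (simp add: x_def)
    moreover have "2 * x \<le> x * x" using \<open>2 \<le> x\<close> by (intro mult_right_mono) auto
    ultimately have "x + 1 \<le> x * x" by linarith
    then have "ln (x + 1) \<le> ln (x * x)" using \<open>2 \<le> x\<close> by simp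
    also have "\<dots> = 2 * ln x" using \<open>2 \<le> x\<close> by (simp add: ln_mult)
    finally have "ln (x + 1) / real (m k) \<le> 2 * ln x / real (m k)"
      by (rule divide_right_mono) simp
    moreover have "0 \<le> ln (x + 1) / real (m k)" using \<open>2 \<le> x\<close> by simp
    ultimately show ?case by (simp add: x_def)
  qed
  then have lower: "eventually (\<lambda>k. 0 \<le> ln (real (n k) + 1) / real (m k)) sequentially"
    and upper: "eventually (\<lambda>k. ln (real (n k) + 1) / real (m k) \<le> 2 * (ln (real (n k)) / real (m k)))
      sequentially"
    unfolding eventually_conj_iff by blast+
  have "(\<lambda>k. 2 * (ln (real (n k)) / real (m k))) \<longlonglongrightarrow> 0"
    using tendsto_mult[OF tendsto_const ln_n, of 2] by simp
  with lower upper have "(\<lambda>k. ln (real (n k) + 1) / real (m k)) \<longlonglongrightarrow> 0"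
    by (rule tendsto_sandwich[OF _ _ tendsto_const])
  then show ?thesis by (simp add: subexponential_def)
qed

lemma filterlim_at_top_of_log_ratio:
  assumes ratio: "filterlim (\<lambda>k. real (m k) / ln (real (n k))) at_top sequentially"
    and n: "filterlim n at_top sequentially"
  shows "filterlim m at_top sequentially"
proof -
  have "eventually (\<lambda>k. 3 \<le> n k) sequentially" using n by (simp add: filterlim_at_top)
  then have "eventually (\<lambda>k. real (m k) / ln (real (n k)) \<le> real (m k)) sequentially"
  proof eventually_elim
    case (elim k)
    have "exp 1 \<le> real (n k)" using exp_le elim by linarith
    then have "1 \<le> ln (real (n k))" using elim by (simp add: ln_ge_iff)
    then show ?case by (simp add: divide_le_eq_1 field_simps mult_le_cancel_left1)
  qed
  then have real_m: "filterlim (\<lambda>k. real (m k)) at_top sequentially"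
    by (rule filterlim_at_top_mono[OF ratio])
  show ?thesis unfolding filterlim_at_top
  proof
    fix Z :: nat
    have "eventually (\<lambda>k. real Z \<le> real (m k)) sequentially"
      using real_m unfolding filterlim_at_top by blast
    then show "eventually (\<lambda>k. Z \<le> m k) sequentially" by simp
  qed
qed

lemma subexponential_of_log_ratio:
  assumes "filterlim (\<lambda>k. real (m k) / ln (real (n k))) at_top sequentially"
    and "filterlim n at_top sequentially"
  shows "subexponential (\<lambda>k. real (n k) + 1) m"
proof (rule subexponential_succ[OF _ assms(2)])
  show "(\<lambda>k. ln (real (n k)) / real (m k)) \<longlonglongrightarrow> 0"
    using tendsto_inverse_0_at_top[OF assms(1)] by simp
qed

lemma limsup_scaled_logE_le:
  assumes C: "subexponential C m" and m: "filterlim m at_top sequentially"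
    and q: "q \<longlonglongrightarrow> q0" "0 < q0"
    and F: "eventually (\<lambda>k. 0 \<le> F k \<and> F k \<le> C k * q k ^ m k) sequentially"
  shows "limsup (\<lambda>k. ereal (1 / real (m k)) * logE (F k)) \<le> ereal (ln q0)"
proof (rule ereal_le_epsilon2)
  fix e :: real assume "0 < e"
  let ?a = "q0 * exp e"
  have "q0 < ?a" using \<open>0 < e\<close> q(2) by simp
  have "eventually (\<lambda>k. C k * q k ^ m k < ?a ^ m k) sequentially"
    by (rule eventually_subexponential_power_less[OF C m q \<open>q0 < ?a\<close>])
  moreover have "eventually (\<lambda>k. 1 \<le> m k) sequentially" using m by (simp add: filterlim_at_top)
  ultimately have "eventually (\<lambda>k. ereal (1 / real (m k)) * logE (F k) \<le> ereal (ln q0) + ereal e)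
      sequentially"
    using F
  proof eventually_elim
    case (elim k)
    show ?case
    proof (cases "F k = 0")
      case False
      then have "ln (F k) < ln (?a ^ m k)" using elim q(2) by simp
      also have "\<dots> = real (m k) * (ln q0 + e)" using q(2) by (simp add: ln_realpow ln_mult)
      finally have "ln (F k) / real (m k) < ln q0 + e" using elim by (simp add: divide_less_eq mult.commute)
      then show ?thesis using False by (simp add: logE_def)
    qed (use elim in \<open>simp add: logE_def\<close>)
  qed
  then show "limsup (\<lambda>k. ereal (1 / real (m k)) * logE (F k)) \<le> ereal (ln q0) + ereal e"
    by (rule Limsup_bounded)
qed

lemma eventually_ratio_gt:
  assumes C: "subexponential C m" and m: "filterlim m at_top sequentially"
    and n: "filterlim n at_top sequentially" and q: "q \<longlonglongrightarrow> q0" "0 < q0"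
    and "a + q0 < 1"
    and bound: "eventually (\<lambda>k. (1 - x k - 1 / real (n k)) ^ m k \<le> C k * q k ^ m k) sequentially"
  shows "eventually (\<lambda>k. a < x k) sequentially"
proof -
  define g where "g = (q0 + 1 - a) / 2"
  have "q0 < g" "0 < 1 - a - g" using \<open>a + q0 < 1\<close> by (simp_all add: g_def)
  have "(\<lambda>k. 1 / real (n k)) \<longlonglongrightarrow> 0"
    using filterlim_compose[OF filterlim_real_sequentially n]
    by (intro tendsto_divide_0[OF tendsto_const] filterlim_at_top_imp_at_infinity)
  then have "eventually (\<lambda>k. 1 / real (n k) < 1 - a - g) sequentially"
    using \<open>0 < 1 - a - g\<close> by (rule order_tendstoD(2))
  with eventually_subexponential_power_less[OF C m q \<open>q0 < g\<close>] bound
  show ?thesis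
  proof eventually_elim
    case (elim k)
    show ?case
    proof (rule ccontr)
      assume "\<not> a < x k"
      then have "g ^ m k \<le> (1 - x k - 1 / real (n k)) ^ m k"
        using elim \<open>0 < q0\<close> \<open>q0 < g\<close> by (intro power_mono) auto
      then show False using elim by simp
    qed
  qed
qed

lemma eventually_ratio_lt:
  assumes C: "subexponential C m" and m: "filterlim m at_top sequentially"
    and q: "q \<longlonglongrightarrow> q0" "0 < q0"
    and b: "0 < b" "b \<le> 1 / 2" "q0 < 2 * sqrt (b * (1 - b))"
    and bound: "eventually (\<lambda>k. x k < 1 / 2 \<and>
      x k * (2 * sqrt (x k * (1 - x k))) ^ m k / (real (m k) + 1) \<le> C k * q k ^ m k) sequentially"
  shows "eventually (\<lambda>k. x k < b) sequentially"
proof -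
  define r where "r = 2 * sqrt (b * (1 - b))"
  have "(\<lambda>k. ln (real (m k)) / real (m k)) \<longlonglongrightarrow> 0"
    using filterlim_compose[OF ln_x_over_x_tendsto_0 filterlim_compose[OF filterlim_real_sequentially m]] .
  then have "subexponential (\<lambda>k. 1 / b * (real (m k) + 1) * C k) m"
    using b by (intro subexponential_mult subexponential_const subexponential_succ C m) auto
  moreover have "q0 < r" using b by (simp add: r_def)
  ultimately have "eventually (\<lambda>k. 1 / b * (real (m k) + 1) * C k * q k ^ m k < r ^ m k) sequentially"
    using eventually_subexponential_power_less[OF _ m q] by blast
  with bound
  show ?thesis
  proof eventually_elim
    case (elim k)
    show ?case
    proof (rule ccontr)
      assume "\<not> x k < b"
      have "x k * (1 - x k) - b * (1 - b) = (x k - b) * (1 - x k - b)" by (simp add: algebra_simps)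
      moreover have "0 \<le> (x k - b) * (1 - x k - b)"
        using \<open>\<not> x k < b\<close> elim b by (intro mult_nonneg_nonneg) auto
      ultimately have "b * (1 - b) \<le> x k * (1 - x k)" by linarith
      then have "r \<le> 2 * sqrt (x k * (1 - x k))" by (simp add: r_def)
      then have "b * r ^ m k / (real (m k) + 1) \<le> x k * (2 * sqrt (x k * (1 - x k))) ^ m k / (real (m k) + 1)"
        using \<open>\<not> x k < b\<close> b by (intro divide_right_mono mult_mono power_mono) (auto simp: r_def)
      also have "\<dots> \<le> C k * q k ^ m k" using elim by simp
      finally have "r ^ m k \<le> 1 / b * (real (m k) + 1) * C k * q k ^ m k"
        using b by (simp add: field_simps)
      then show False using elim by linarith
    qed
  qed
qed

lemma ratio_tendsto_one_fifth:
  assumes C: "subexponential C m" and m: "filterlim m at_top sequentially"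
    and n: "filterlim n at_top sequentially" and q: "q \<longlonglongrightarrow> 4 / 5"
    and bounds: "eventually (\<lambda>k. x k < 1 / 2
      \<and> (1 - x k - 1 / real (n k)) ^ m k \<le> C k * q k ^ m k
      \<and> x k * (2 * sqrt (x k * (1 - x k))) ^ m k / (real (m k) + 1) \<le> C k * q k ^ m k) sequentially"
  shows "x \<longlonglongrightarrow> 1 / 5"
proof (rule order_tendstoI)
  fix a :: real assume "a < 1 / 5"
  then show "eventually (\<lambda>k. a < x k) sequentially"
    using bounds by (intro eventually_ratio_gt[OF C m n q]) (auto elim: eventually_mono)
next
  fix b :: real assume "1 / 5 < b"
  define b' where "b' = min b (1 / 4)"
  have "(2 / 5)\<^sup>2 < b' * (1 - b')"
  proof -
    have "0 < (b' - 1 / 5) * (4 / 5 - b')" using \<open>1 / 5 < b\<close> by (intro mult_pos_pos) (auto simp: b'_def)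
    moreover have "b' * (1 - b') - (2 / 5)\<^sup>2 = (b' - 1 / 5) * (4 / 5 - b')"
      by (simp add: power2_eq_square field_simps)
    ultimately show ?thesis by linarith
  qed
  then have "4 / 5 < 2 * sqrt (b' * (1 - b'))" using real_less_rsqrt by fastforce
  then have "eventually (\<lambda>k. x k < b') sequentially"
    using bounds \<open>1 / 5 < b\<close> by (intro eventually_ratio_lt[OF C m q]) (auto simp: b'_def elim: eventually_mono)
  then show "eventually (\<lambda>k. x k < b) sequentially"
    by (rule eventually_mono) (simp add: b'_def)
qed

lemma tendsto_loss_rate:
  assumes n: "filterlim n at_top sequentially"
    and x: "(\<lambda>k. real (l k) / real (n k)) \<longlonglongrightarrow> x0" "0 \<le> x0" "x0 \<le> 1"
    and "eventually (\<lambda>k. l k \<le> n k) sequentially"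
  shows "(\<lambda>k. loss_rate (n k) (l k)) \<longlonglongrightarrow> max (1 - x0) (2 * sqrt (x0 * (1 - x0)))"
proof -
  have inv: "(\<lambda>k. 1 / real (n k)) \<longlonglongrightarrow> 0"
    using filterlim_compose[OF filterlim_real_sequentially n]
    by (intro tendsto_divide_0[OF tendsto_const] filterlim_at_top_imp_at_infinity)
  have "(\<lambda>k. max (1 - (sqrt (1 / real (n k) + real (l k) / real (n k)) - sqrt (2 * (1 / real (n k))))\<^sup>2)
                  (1 - (sqrt (1 - real (l k) / real (n k)) - sqrt (real (l k) / real (n k)))\<^sup>2))
      \<longlonglongrightarrow> max (1 - (sqrt (0 + x0) - sqrt (2 * 0))\<^sup>2) (1 - (sqrt (1 - x0) - sqrt x0)\<^sup>2)"
    by (intro tendsto_intros x inv)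
  moreover have "(sqrt (1 - x0) - sqrt x0)\<^sup>2 = 1 - 2 * sqrt (x0 * (1 - x0))"
    using x(2,3) by (simp add: power2_diff real_sqrt_mult)
  moreover have "eventually (\<lambda>k. 1 \<le> n k) sequentially" using n by (simp add: filterlim_at_top)
  with \<open>eventually (\<lambda>k. l k \<le> n k) sequentially\<close>
  have "eventually (\<lambda>k. max (1 - (sqrt (1 / real (n k) + real (l k) / real (n k)) - sqrt (2 * (1 / real (n k))))\<^sup>2)
                  (1 - (sqrt (1 - real (l k) / real (n k)) - sqrt (real (l k) / real (n k)))\<^sup>2)
      = loss_rate (n k) (l k)) sequentially"
    by eventually_elim (simp add: loss_rate_def add_divide_distrib diff_divide_distrib)
  ultimately show ?thesis using x(2) by (simp add: Lim_transform_eventually)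
qed

lemma tendsto_div_5: "(\<lambda>n. real (n div 5) / real n) \<longlonglongrightarrow> 1 / 5"
proof (rule tendsto_sandwich)
  show "eventually (\<lambda>n. 1 / 5 - 1 / real n \<le> real (n div 5) / real n) sequentially"
    using eventually_gt_at_top[of 0]
  proof eventually_elim
    case (elim n)
    have "real n \<le> 5 * real (n div 5) + 5" by linarith
    moreover have "(1 / 5 - 1 / real n) * real n = real n / 5 - 1" using elim by (simp add: algebra_simps)
    ultimately have "(1 / 5 - 1 / real n) * real n \<le> real (n div 5)" by linarith
    then show ?case using elim by (simp add: pos_le_divide_eq)
  qed
  show "eventually (\<lambda>n. real (n div 5) / real n \<le> 1 / 5) sequentially"
    using eventually_gt_at_top[of 0]
  proof eventually_elim
    case (elim n)
    have "5 * real (n div 5) \<le> real n" by linarith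
    then show ?case using elim by (simp add: field_simps)
  qed
  show "(\<lambda>n. 1 / 5 - 1 / real n) \<longlonglongrightarrow> 1 / 5"
    using tendsto_diff[OF tendsto_const lim_const_over_n[of 1]] by simp
qed simp

lemma tendsto_loss_rate_one_fifth: "(\<lambda>k. loss_rate (2 * k) (2 * k div 5)) \<longlonglongrightarrow> 4 / 5"
proof -
  have double: "filterlim (\<lambda>k. 2 * k) at_top sequentially" by (rule mult_nat_left_at_top) simp
  show ?thesis
    using tendsto_loss_rate[OF double filterlim_compose[OF tendsto_div_5 double]]
    by (simp add: max_def real_sqrt_divide)
qed

lemma L_opt_loss_bounds:
  assumes opt: "l \<in> L_opt n m" and "even n" "10 \<le> n"
  defines "x \<equiv> real l / real n"
  shows "x < 1 / 2" and "0 \<le> 1 - p1 n m l"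
    and "1 - p1 n m l \<le> (real n + 1) * loss_rate n (n div 5) ^ m"
    and "(1 - x - 1 / real n) ^ m \<le> 1 - p1 n m l"
    and "x * (2 * sqrt (x * (1 - x))) ^ m / (real m + 1) \<le> 1 - p1 n m l"
proof -
  have "2 \<le> l" "2 * l + 2 \<le> n" using opt \<open>even n\<close> by (auto simp: L_opt_def)
  then interpret two_round_partition n l using \<open>even n\<close> by unfold_locales
  show "x < 1 / 2" using l_le by (simp add: x_def field_simps)
  show "0 \<le> 1 - p1 n m l" using l_le by (simp add: one_minus_p1_eq)
  show "(1 - x - 1 / real n) ^ m \<le> 1 - p1 n m l" unfolding x_def by (rule one_minus_p1_ge_no_votes)
  show "x * (2 * sqrt (x * (1 - x))) ^ m / (real m + 1) \<le> 1 - p1 n m l"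
    unfolding x_def by (rule one_minus_p1_ge_final_round)
  have "n div 5 \<in> {2..n div 2 - 1}" using \<open>10 \<le> n\<close> by auto
  then have "1 - p1 n m l \<le> 1 - p1 n m (n div 5)" using opt by (simp add: L_opt_def)
  also have "\<dots> \<le> (real n + 1) * loss_rate n (n div 5) ^ m"
    using \<open>even n\<close> \<open>10 \<le> n\<close> \<open>n div 5 \<in> _\<close>
    by (intro two_round_partition.one_minus_p1_le) (unfold_locales, auto)
  finally show "1 - p1 n m l \<le> (real n + 1) * loss_rate n (n div 5) ^ m" .
qed

theorem mainTheorem8:
  fixes M :: "nat \<Rightarrow> nat" and l :: "nat \<Rightarrow> nat"
  assumes "filterlim (\<lambda>n. real (M n) / ln (real n)) at_top sequentially"
    and "eventually (\<lambda>k. l (2 * k) \<in> L_opt (2 * k) (M (2 * k))) sequentially"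
  shows "((\<lambda>k. real (l (2 * k)) / real (2 * k)) \<longlonglongrightarrow> 1 / 5) \<and>
    limsup (\<lambda>k. ereal (1 / real (M (2 * k))) * logE (1 - p1 (2 * k) (M (2 * k)) (l (2 * k))))
           \<le> ereal (ln (4 / 5))"
proof -
  define m x F q C where "m k = M (2 * k)" and "x k = real (l (2 * k)) / real (2 * k)"
    and "F k = 1 - p1 (2 * k) (m k) (l (2 * k))" and "q k = loss_rate (2 * k) (2 * k div 5)"
    and "C k = real (2 * k) + 1" for k
  have double: "filterlim (\<lambda>k. 2 * k) at_top sequentially" by (rule mult_nat_left_at_top) simp
  have ratio: "filterlim (\<lambda>k. real (m k) / ln (real (2 * k))) at_top sequentially"
    using filterlim_compose[OF assms(1) double] by (simp add: m_def)
  have m: "filterlim m at_top sequentially" by (rule filterlim_at_top_of_log_ratio[OF ratio double])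
  have C: "subexponential C m" unfolding C_def by (rule subexponential_of_log_ratio[OF ratio double])
  have q: "q \<longlonglongrightarrow> 4 / 5" unfolding q_def[abs_def] by (rule tendsto_loss_rate_one_fifth)
  have bounds: "eventually (\<lambda>k. x k < 1 / 2 \<and> 0 \<le> F k \<and> F k \<le> C k * q k ^ m k
      \<and> (1 - x k - 1 / real (2 * k)) ^ m k \<le> F k
      \<and> x k * (2 * sqrt (x k * (1 - x k))) ^ m k / (real (m k) + 1) \<le> F k) sequentially"
    using assms(2) eventually_ge_at_top[of 5]
  proof eventually_elim
    case (elim k)
    then have "even (2 * k)" "10 \<le> 2 * k" by auto
    from L_opt_loss_bounds[OF elim(1) this] show ?case unfolding x_def F_def C_def q_def m_def by blast
  qed
  have "x \<longlonglongrightarrow> 1 / 5"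
    using bounds by (intro ratio_tendsto_one_fifth[OF C m double q]) (auto elim: eventually_mono)
  moreover have "limsup (\<lambda>k. ereal (1 / real (m k)) * logE (F k)) \<le> ereal (ln (4 / 5))"
    using bounds by (intro limsup_scaled_logE_le[OF C m q]) (auto elim: eventually_mono)
  ultimately show ?thesis unfolding x_def[abs_def] F_def m_def by blast
qed

end
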